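(* Let $K$ be a field containing no $n$-th root of unity other than $1$. Let $A$ be a central simple algebra over $K$ of dimension $n^2$ such that every commutative subalgebra of $A$ other than $K$ is maximal (among commutative subalgebras). Then the group $\mathrm{SL}_1(A)$ is CA.
   Context: $\mathrm{SL}_1(A)$ is the group of elements of $A^\times$ of reduced norm $1$. A group is CA if the centralizer of every non-trivial element is abelian. *)

theory Defs
  imports "Jordan_Normal_Form.Char_Poly"
begin

text \<open>A K-algebra A: a ring_1 type 'a together with a ring homomorphism
  of_K from the field 'k into the centre of 'a. Scalar multiplication c.x is of_K c * x.\<close>

definition K_algebra :: "('k::field \<Rightarrow> 'a::ring_1) \<Rightarrow> bool" where
  "K_algebra of_K \<longleftrightarrow>
     of_K 1 = 1 \<and>
     (\<forall>c d. of_K (c + d) = of_K c + of_K d) \<and>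
     (\<forall>c d. of_K (c * d) = of_K c * of_K d) \<and>
     (\<forall>c x. of_K c * x = x * of_K c)"

definition is_basis :: "('k::field \<Rightarrow> 'a::ring_1) \<Rightarrow> nat \<Rightarrow> (nat \<Rightarrow> 'a) \<Rightarrow> bool" where
  "is_basis of_K N b \<longleftrightarrow>
     (\<forall>x. \<exists>!c. dim_vec c = N \<and> x = (\<Sum>i<N. of_K (c $ i) * b i))"

definition fin_dim :: "('k::field \<Rightarrow> 'a::ring_1) \<Rightarrow> nat \<Rightarrow> bool" where
  "fin_dim of_K N \<longleftrightarrow> (\<exists>b. is_basis of_K N b)"

definition two_sided_ideal :: "'a::ring_1 set \<Rightarrow> bool" where
  "two_sided_ideal I \<longleftrightarrow> 0 \<in> I \<and> (\<forall>x\<in>I. \<forall>y\<in>I. x + y \<in> I) \<and> (\<forall>x\<in>I. - x \<in> I) \<and>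
     (\<forall>x\<in>I. \<forall>r. r * x \<in> I \<and> x * r \<in> I)"

definition central_simple_algebra :: "('k::field \<Rightarrow> 'a::ring_1) \<Rightarrow> nat \<Rightarrow> bool" where
  "central_simple_algebra of_K N \<longleftrightarrow>
     K_algebra of_K \<and> fin_dim of_K N \<and>
     {x. \<forall>y. x * y = y * x} = range of_K \<and>
     (\<forall>I::'a set. two_sided_ideal I \<longrightarrow> I = {0} \<or> I = UNIV)"

definition comm_subalgebra :: "('k::field \<Rightarrow> 'a::ring_1) \<Rightarrow> 'a set \<Rightarrow> bool" where
  "comm_subalgebra of_K S \<longleftrightarrow> range of_K \<subseteq> S \<and>
     (\<forall>x\<in>S. \<forall>y\<in>S. x + y \<in> S \<and> x * y \<in> S \<and> x * y = y * x)"

definition maximal_comm_subalgebra :: "('k::field \<Rightarrow> 'a::ring_1) \<Rightarrow> 'a set \<Rightarrow> bool" where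
  "maximal_comm_subalgebra of_K S \<longleftrightarrow> comm_subalgebra of_K S \<and>
     (\<forall>T. comm_subalgebra of_K T \<longrightarrow> S \<subseteq> T \<longrightarrow> T = S)"

definition coords :: "('k::field \<Rightarrow> 'a::ring_1) \<Rightarrow> nat \<Rightarrow> (nat \<Rightarrow> 'a) \<Rightarrow> 'a \<Rightarrow> 'k vec" where
  "coords of_K N b x = (THE c. dim_vec c = N \<and> x = (\<Sum>i<N. of_K (c $ i) * b i))"

definition lmult_mat :: "('k::field \<Rightarrow> 'a::ring_1) \<Rightarrow> nat \<Rightarrow> 'a \<Rightarrow> 'k mat" where
  "lmult_mat of_K N a =
     (let b = (SOME b. is_basis of_K N b) in
      mat N N (\<lambda>(i, j). coords of_K N b (a * b j) $ i))"

text \<open>Reduced characteristic polynomial of a in a CSA of degree n (dimension n^2):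
  the unique monic polynomial of degree n whose n-th power is the characteristic
  polynomial of left multiplication by a.\<close>
definition red_charpoly :: "('k::field \<Rightarrow> 'a::ring_1) \<Rightarrow> nat \<Rightarrow> 'a \<Rightarrow> 'k poly" where
  "red_charpoly of_K n a =
     (THE p. degree p = n \<and> lead_coeff p = 1 \<and> p ^ n = char_poly (lmult_mat of_K (n^2) a))"

definition red_norm :: "('k::field \<Rightarrow> 'a::ring_1) \<Rightarrow> nat \<Rightarrow> 'a \<Rightarrow> 'k" where
  "red_norm of_K n a = (-1) ^ n * coeff (red_charpoly of_K n a) 0"

definition SL1 :: "('k::field \<Rightarrow> 'a::ring_1) \<Rightarrow> nat \<Rightarrow> 'a set" where
  "SL1 of_K n = {a. (\<exists>u. u * a = 1 \<and> a * u = 1) \<and> red_norm of_K n a = 1}"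

definition centralizer_in :: "'a::monoid_mult set \<Rightarrow> 'a \<Rightarrow> 'a set" where
  "centralizer_in G g = {x \<in> G. x * g = g * x}"

definition CA :: "'a::monoid_mult set \<Rightarrow> bool" where
  "CA G \<longleftrightarrow> (\<forall>g\<in>G. g \<noteq> 1 \<longrightarrow>
      (\<forall>x\<in>centralizer_in G g. \<forall>y\<in>centralizer_in G g. x * y = y * x))"

end

theory Submission
  imports Defs
begin

text \<open>A scalar of_K c has reduced norm c^n, so by the hypothesis on roots of unity the only
  central element of SL_1(A) is 1. A non-central g therefore lies in a commutative subalgebra
  other than K, namely its bicommutant, which is then maximal. A maximal commutative subalgebra
  contains everything commuting with it, so every x commuting with g lies in the bicommutant
  of g, and hence commutes with every y that commutes with g.\<close>

lemma K_algebra_of_K_0: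
  assumes "K_algebra of_K" shows "of_K 0 = 0"
proof -
  have "of_K (0 + 0) = of_K 0 + of_K 0" using assms unfolding K_algebra_def by blast
  then show ?thesis by simp
qed

lemma K_algebra_of_K_commute:
  assumes "K_algebra of_K" shows "of_K c * x = x * of_K c"
  using assms unfolding K_algebra_def by blast

lemma coords_eqI:
  assumes "is_basis of_K N b" "dim_vec v = N" "x = (\<Sum>i<N. of_K (v $ i) * b i)"
  shows "coords of_K N b x = v"
proof -
  have "\<exists>!v. dim_vec v = N \<and> x = (\<Sum>i<N. of_K (v $ i) * b i)"
    using assms(1) unfolding is_basis_def by blast
  then show ?thesis unfolding coords_def by (rule the1_equality) (simp add: assms(2,3))
qed

lemma lmult_mat_of_K:
  assumes "K_algebra of_K" "fin_dim of_K N"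
  shows "lmult_mat of_K N (of_K c) = c \<cdot>\<^sub>m 1\<^sub>m N"
proof -
  define b where "b = (SOME b. is_basis of_K N b)"
  have b: "is_basis of_K N b"
    using assms(2) unfolding fin_dim_def b_def by (metis someI)
  have coords_scaled_basis: "coords of_K N b (of_K c * b j) = c \<cdot>\<^sub>v unit_vec N j"
    if "j < N" for j
  proof (rule coords_eqI[OF b])
    have "(\<Sum>i<N. of_K ((c \<cdot>\<^sub>v unit_vec N j) $ i) * b i)
        = (\<Sum>i<N. if i = j then of_K c * b i else 0)"
      by (rule sum.cong) (auto simp: K_algebra_of_K_0[OF assms(1)] unit_vec_def)
    then show "of_K c * b j = (\<Sum>i<N. of_K ((c \<cdot>\<^sub>v unit_vec N j) $ i) * b i)"
      using that by simp
  qed simp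
  show ?thesis
    unfolding lmult_mat_def Let_def b_def[symmetric]
    by (rule eq_matI) (auto simp: coords_scaled_basis unit_vec_def)
qed

lemma char_poly_smult_one_mat:
  "char_poly (c \<cdot>\<^sub>m 1\<^sub>m N) = [:- c, 1:] ^ N"
proof -
  have "char_poly (c \<cdot>\<^sub>m 1\<^sub>m N) = (\<Prod>a\<leftarrow>diag_mat (c \<cdot>\<^sub>m 1\<^sub>m N). [:- a, 1:])"
    by (rule char_poly_upper_triangular[of _ N]) (auto simp: upper_triangular_def)
  also have "diag_mat (c \<cdot>\<^sub>m 1\<^sub>m N) = replicate N c"
    by (rule nth_equalityI) (auto simp: diag_mat_def)
  finally show ?thesis by (simp add: prod_list_replicate)
qed

text \<open>The n-th root of (X - c)^(n*n) among monic polynomials is unique: its root c has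
  multiplicity n, which already accounts for its whole degree.\<close>

lemma monic_root_of_linear_power:
  fixes p :: "'k::field poly"
  assumes "degree p = n" "lead_coeff p = 1" "p ^ n = [:- c, 1:] ^ (n * n)"
  shows "p = [:- c, 1:] ^ n"
proof (cases "n = 0")
  case True
  then show ?thesis using assms(1,2) by (metis degree_0_id one_pCons power_0)
next
  case False
  have "p \<noteq> 0" using assms(2) by auto
  have order_power: "order c (p ^ m) = m * order c p" for m
    by (induction m) (simp_all add: order_mult \<open>p \<noteq> 0\<close>)
  have "order c (p ^ n) = n * n"
    using assms(3) by (simp only: order_power_n_n)
  then have "order c p = n" using order_power[of n] False by simp
  then have "[:- c, 1:] ^ n dvd p" using order_1[of c p] by simp
  then obtain r where r: "p = [:- c, 1:] ^ n * r" by (elim dvdE)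
  with \<open>p \<noteq> 0\<close> have "r \<noteq> 0" by auto
  with r assms(1) have "degree r = 0" by (simp add: degree_mult_eq degree_linear_power)
  moreover have "lead_coeff r = 1" using r assms(2) by (simp add: lead_coeff_mult lead_coeff_power)
  ultimately have "r = 1" by (metis degree_0_id one_pCons)
  with r show ?thesis by simp
qed

lemma red_charpoly_of_K:
  assumes "K_algebra of_K" "fin_dim of_K (n\<^sup>2)"
  shows "red_charpoly of_K n (of_K c) = [:- c, 1:] ^ n"
proof -
  have char_poly: "char_poly (lmult_mat of_K (n\<^sup>2) (of_K c)) = [:- c, 1:] ^ (n * n)"
    using assms by (simp add: lmult_mat_of_K char_poly_smult_one_mat power2_eq_square)
  show ?thesis
    unfolding red_charpoly_def char_poly
  proof (rule the_equality)
    show "degree ([:- c, 1:] ^ n) = n \<and> lead_coeff ([:- c, 1:] ^ n) = 1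
        \<and> ([:- c, 1:] ^ n) ^ n = [:- c, 1:] ^ (n * n)"
      using lead_coeff_power[of "[:- c, 1:]" n] by (simp add: degree_linear_power power_mult)
  qed (blast intro: monic_root_of_linear_power)
qed

lemma red_norm_of_K:
  assumes "K_algebra of_K" "fin_dim of_K (n\<^sup>2)"
  shows "red_norm of_K n (of_K c) = c ^ n"
proof -
  have "coeff ([:- c, 1:] ^ n) 0 = (- c) ^ n"
    by (simp add: poly_0_coeff_0[symmetric] poly_power)
  then have "red_norm of_K n (of_K c) = ((- 1) * (- c)) ^ n"
    unfolding red_norm_def red_charpoly_of_K[OF assms] by (simp only: power_mult_distrib)
  then show ?thesis by simp
qed

lemma of_K_in_SL1_eq_1:
  assumes "K_algebra of_K" "fin_dim of_K (n\<^sup>2)" "\<forall>\<zeta>::'k. \<zeta> ^ n = 1 \<longrightarrow> \<zeta> = 1"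
    and "of_K (c::'k::field) \<in> SL1 of_K n"
  shows "of_K c = 1"
proof -
  have "c ^ n = 1" using assms(4) red_norm_of_K[OF assms(1,2)] unfolding SL1_def by simp
  then have "c = 1" using assms(3) by blast
  then show ?thesis using assms(1) unfolding K_algebra_def by simp
qed

definition bicommutant :: "'a::semigroup_mult set \<Rightarrow> 'a set" where
  "bicommutant U = {z. \<forall>w. (\<forall>u\<in>U. w * u = u * w) \<longrightarrow> z * w = w * z}"

lemma subset_bicommutant: "U \<subseteq> bicommutant U"
  unfolding bicommutant_def by auto

lemma comm_subalgebra_bicommutant:
  assumes "K_algebra of_K" and U: "\<forall>u\<in>U. \<forall>v\<in>U. u * v = v * u"
  shows "comm_subalgebra of_K (bicommutant U)"
  unfolding comm_subalgebra_def
proof (intro conjI ballI)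
  show "range of_K \<subseteq> bicommutant U"
    using K_algebra_of_K_commute[OF assms(1)] unfolding bicommutant_def by auto
next
  fix x y assume x: "x \<in> bicommutant U" and y: "y \<in> bicommutant U"
  have "\<forall>u\<in>U. y * u = u * y" using U y unfolding bicommutant_def by auto
  with x show "x * y = y * x" unfolding bicommutant_def by auto
  show "x + y \<in> bicommutant U"
    using x y unfolding bicommutant_def by (simp add: distrib_left distrib_right)
  show "x * y \<in> bicommutant U"
    unfolding bicommutant_def
  proof (intro CollectI allI impI)
    fix w assume "\<forall>u\<in>U. w * u = u * w"
    then have "x * w = w * x" "y * w = w * y" using x y unfolding bicommutant_def by auto
    then show "x * y * w = w * (x * y)" by (metis mult.assoc)
  qed
qed

lemma maximal_comm_subalgebra_absorbs_commuting:
  assumes "K_algebra of_K" and S: "maximal_comm_subalgebra of_K S"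
    and x: "\<forall>s\<in>S. s * x = x * s"
  shows "x \<in> S"
proof -
  have "comm_subalgebra of_K S" using S unfolding maximal_comm_subalgebra_def by blast
  then have "\<forall>u\<in>insert x S. \<forall>v\<in>insert x S. u * v = v * u"
    using x unfolding comm_subalgebra_def by auto
  then have "comm_subalgebra of_K (bicommutant (insert x S))"
    by (rule comm_subalgebra_bicommutant[OF assms(1)])
  moreover have "S \<subseteq> bicommutant (insert x S)"
    using subset_bicommutant[of "insert x S"] by blast
  ultimately have "bicommutant (insert x S) = S"
    using S unfolding maximal_comm_subalgebra_def by blast
  then show ?thesis using subset_bicommutant[of "insert x S"] by blast
qed

lemma commute_if_commute_with_noncentral:
  assumes "K_algebra of_K"
    and maxl: "\<forall>S. comm_subalgebra of_K S \<and> S \<noteq> range of_K \<longrightarrow> maximal_comm_subalgebra of_K S"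
    and "g \<notin> range of_K" and xg: "x * g = g * x" and yg: "y * g = g * y"
  shows "x * y = y * x"
proof -
  let ?S = "bicommutant {g}"
  have "g \<in> ?S" using subset_bicommutant by blast
  then have "maximal_comm_subalgebra of_K ?S"
    using maxl comm_subalgebra_bicommutant[OF assms(1), of "{g}"] assms(3) by auto
  moreover have "\<forall>s\<in>?S. s * x = x * s" using xg unfolding bicommutant_def by auto
  ultimately have "x \<in> ?S" by (rule maximal_comm_subalgebra_absorbs_commuting[OF assms(1)])
  with yg show ?thesis unfolding bicommutant_def by auto
qed

theorem proposition2p9:
  fixes of_K :: "'k::field \<Rightarrow> 'a::ring_1" and n :: nat
  assumes no_roots: "\<forall>\<zeta>::'k. \<zeta> ^ n = 1 \<longrightarrow> \<zeta> = 1"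
    and csa: "central_simple_algebra of_K (n^2)"
    and maxl: "\<forall>S. comm_subalgebra of_K S \<and> S \<noteq> range of_K \<longrightarrow> maximal_comm_subalgebra of_K S"
  shows "CA (SL1 of_K n)"
  unfolding CA_def
proof (intro ballI impI)
  have K: "K_algebra of_K" and fd: "fin_dim of_K (n^2)"
    using csa unfolding central_simple_algebra_def by auto
  fix g x y assume g: "g \<in> SL1 of_K n" "g \<noteq> 1"
    and "x \<in> centralizer_in (SL1 of_K n) g" "y \<in> centralizer_in (SL1 of_K n) g"
  then have "x * g = g * x" "y * g = g * y"
    unfolding centralizer_in_def by auto
  have "g \<notin> range of_K"
    using g of_K_in_SL1_eq_1[OF K fd no_roots] by blast
  then show "x * y = y * x"
    using commute_if_commute_with_noncentral[OF K maxl] \<open>x * g = g * x\<close> \<open>y * g = g * y\<close> by blast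
qed

end
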